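(* Let $\mathcal{G}^{\mathrm{los}}=(\mathcal{V},\mathcal{E}^{\mathrm{los}})$ be a finite undirected graph with vertex set partitioned into subgroups $\mathcal{V}_1,\dots,\mathcal{V}_M$, such that $\mathcal{G}^{\mathrm{los}}$ is connected and each induced subgraph $\mathcal{G}^{\mathrm{los}}[\mathcal{V}_m]$ is connected. Let each edge $(v_i,v_j)\in\mathcal{E}^{\mathrm{los}}$ carry a real weight $w^{\mathrm{d+los}}_{i,j}=w^{\mathrm{los}}_{i,j}+w^{\mathrm{d}}_{i,j}$, and define $w'_{i,j}=-\beta w^{\mathrm{d+los}}_{i,j}$ if $v_i,v_j$ lie in the same subgroup and $w'_{i,j}=-w^{\mathrm{d+los}}_{i,j}$ otherwise, where $\beta\gg1$ is chosen so that every intra-subgroup weight $w'_{i,j}$ is strictly smaller than every inter-subgroup weight $w'_{i',j'}$. Let $\bar{\mathcal{T}}$ (the ULOS-LCT) be a spanning tree of $\mathcal{G}^{\mathrm{los}}$ minimizing $\sum_{(v_i,v_j)\in\mathcal{E}(\mathcal{T})}w'_{i,j}$ over all spanning trees $\mathcal{T}$ of $\mathcal{G}^{\mathrm{los}}$. Then (i) $\bar{\mathcal{T}}$ is globally and subgroup LOS connected, i.e. it spans $\mathcal{V}$ and each induced subgraph $\bar{\mathcal{T}}[\mathcal{V}_m]$, $m=1,\dots,M$, is connected; and (ii) $\bar{\mathcal{T}}$ is least violated under the nominal controller among candidate trees, i.e. it minimizes $\sum_{(v_i,v_j)\in\mathcal{E}(\mathcal{T})}\big(-w^{\mathrm{d+los}}_{i,j}\big)$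 over all spanning trees $\mathcal{T}$ of $\mathcal{G}^{\mathrm{los}}$ for which every $\mathcal{T}[\mathcal{V}_m]$ is connected.
   Context: Interpretation: vertices are robots, edges are currently Line-of-Sight (LOS) connected pairs (within communication range and with unobstructed segment). The weights quantify, under the nominal task controller $\tilde{\mathbf u}$, how far the pairwise LOS constraints are from being violated (larger $w^{\mathrm{d+los}}_{i,j}$ = less violation). In the paper $w^{\mathrm{los}}_{i,j}=\frac1L\sum_{o=1}^L\big(\dot h^{\mathrm{los}}_{i,j,o}(\hat{\mathbf x},\mathbf x^{\mathrm{obs}},\tilde{\mathbf u})+\gamma h^{\mathrm{los}}_{i,j,o}(\hat{\mathbf x},\mathbf x^{\mathrm{obs}})\big)$ (average margin of the occlusion-free barrier constraints over $L$ obstacle points) and $w^{\mathrm{d}}_{i,j}$ is the margin $f^{\sigma^{\mathrm c}}_{i,j}-B^{\sigma^{\mathrm c}}_{i,j}\tilde{\mathbf u}$ of the linear probabilistic communication-distance constraints $B^{\sigma^{\mathrm c}}_{i,j}\mathbf u\le f^{\sigma^{\mathrm c}}_{i,j}$; the result only uses that each $w^{\mathrm{d+los}}_{i,j}$ is a real number. A graph is subgroup LOS connected if each of its induced subgraphs on $\mathcal{V}_m$ is connected. *)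

theory Defs
  imports Main "HOL.Real"
begin

definition simple_graph :: "'a set \<Rightarrow> 'a set set \<Rightarrow> bool" where
  "simple_graph V E \<longleftrightarrow> finite V \<and> (\<forall>e\<in>E. \<exists>u v. e = {u, v} \<and> u \<noteq> v \<and> u \<in> V \<and> v \<in> V)"

definition ind_connected :: "'a set set \<Rightarrow> 'a set \<Rightarrow> bool" where
  "ind_connected F S \<longleftrightarrow>
     (\<forall>u\<in>S. \<forall>v\<in>S. (u, v) \<in> {(x, y). x \<in> S \<and> y \<in> S \<and> {x, y} \<in> F}\<^sup>*)"

definition acyclic_edges :: "'a set set \<Rightarrow> bool" where
  "acyclic_edges F \<longleftrightarrow>
     (\<forall>u v. {u, v} \<in> F \<longrightarrow> u \<noteq> v \<longrightarrow>
        (u, v) \<notin> {(x, y). {x, y} \<in> F - {{u, v}}}\<^sup>*)"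

definition spanning_tree :: "'a set \<Rightarrow> 'a set set \<Rightarrow> 'a set set \<Rightarrow> bool" where
  "spanning_tree V E T \<longleftrightarrow> T \<subseteq> E \<and> ind_connected T V \<and> acyclic_edges T"

text \<open>Edge e joins two vertices of the same subgroup (subgroups = fibres of grp).\<close>
definition intra :: "('a \<Rightarrow> 'b) \<Rightarrow> 'a set \<Rightarrow> bool" where
  "intra grp e \<longleftrightarrow> (\<exists>u v. e = {u, v} \<and> grp u = grp v)"

definition wprime :: "('a \<Rightarrow> 'b) \<Rightarrow> real \<Rightarrow> ('a set \<Rightarrow> real) \<Rightarrow> 'a set \<Rightarrow> real" where
  "wprime grp \<beta> w e = (if intra grp e then - \<beta> * w e else - w e)"

end

theory Submission
  imports Defs
begin

(* Part (i) is the cut property of minimum spanning trees. If deleting an inter-subgroup edge f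
   from the minimiser separated two vertices of one subgroup, the connectivity of that subgroup in
   the LOS graph would provide an intra-subgroup edge across the cut, and exchanging it for f
   would lower the weight, because intra-subgroup weights lie below all inter-subgroup ones. So
   vertices of a subgroup stay connected after deleting any single inter-subgroup tree edge, and,
   the tree being a forest, also after deleting all of them at once.
   Part (ii): every subgroup-connected spanning tree has exactly sum_m (|V_m| - 1) intra-subgroup
   edges, so the intra-subgroup edges of one such tree together with the inter-subgroup edges of
   another again form a spanning tree. Comparing the minimiser with these two hybrids shows that
   its intra-subgroup part and its inter-subgroup part are optimal separately, and since
   beta > 0 the unscaled total weight is optimal too. *)

definition edge_rel :: "'a set set \<Rightarrow> ('a \<times> 'a) set" where
  "edge_rel F = {(x, y). {x, y} \<in> F}"

lemma edge_rel_iff [simp]: "(x, y) \<in> edge_rel F \<longleftrightarrow> {x, y} \<in> F"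
  by (simp add: edge_rel_def)

lemma edge_rel_rtrancl_sym:
  assumes "(x, y) \<in> (edge_rel F)\<^sup>*"
  shows "(y, x) \<in> (edge_rel F)\<^sup>*"
proof -
  have "sym (edge_rel F)"
    by (auto simp: sym_def insert_commute)
  then show ?thesis
    using assms by (meson sym_rtrancl symD)
qed

lemma edge_rel_rtrancl_mono:
  "F \<subseteq> G \<Longrightarrow> (x, y) \<in> (edge_rel F)\<^sup>* \<Longrightarrow> (x, y) \<in> (edge_rel G)\<^sup>*"
proof -
  assume "F \<subseteq> G"
  then have "edge_rel F \<subseteq> edge_rel G"
    by (auto simp: edge_rel_def)
  then show "(x, y) \<in> (edge_rel F)\<^sup>* \<Longrightarrow> (x, y) \<in> (edge_rel G)\<^sup>*"
    using rtrancl_mono by blast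
qed

lemma edge_rel_rtrancl_subset:
  assumes "\<And>x y. {x, y} \<in> F \<Longrightarrow> (x, y) \<in> (edge_rel G)\<^sup>*"
  shows "(edge_rel F)\<^sup>* \<subseteq> (edge_rel G)\<^sup>*"
  by (rule rtrancl_subset_rtrancl) (auto intro: assms)

lemma edge_rel_rtrancl_Diff_edge:
  assumes "(x, y) \<in> (edge_rel F)\<^sup>*"
  shows "(x, y) \<in> (edge_rel (F - {{a, b}}))\<^sup>* \<or>
         (x, a) \<in> (edge_rel (F - {{a, b}}))\<^sup>* \<and> (b, y) \<in> (edge_rel (F - {{a, b}}))\<^sup>* \<or>
         (x, b) \<in> (edge_rel (F - {{a, b}}))\<^sup>* \<and> (a, y) \<in> (edge_rel (F - {{a, b}}))\<^sup>*"
  using assms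
proof (induction rule: rtrancl_induct)
  case base
  then show ?case by simp
next
  case (step y z)
  show ?case
  proof (cases "{y, z} = {a, b}")
    case True
    then have "y = a \<and> z = b \<or> y = b \<and> z = a"
      by (auto simp: doubleton_eq_iff)
    then show ?thesis
      using step.IH by auto
  next
    case False
    then have "(y, z) \<in> edge_rel (F - {{a, b}})"
      using step.hyps(2) by simp
    then show ?thesis
      using step.IH by (meson rtrancl.rtrancl_into_rtrancl)
  qed
qed

lemma ind_connected_iff:
  "ind_connected F S \<longleftrightarrow> (\<forall>u\<in>S. \<forall>v\<in>S. (u, v) \<in> (edge_rel {f \<in> F. f \<subseteq> S})\<^sup>*)"
proof -
  have "{(x, y). x \<in> S \<and> y \<in> S \<and> {x, y} \<in> F} = edge_rel {f \<in> F. f \<subseteq> S}"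
    by (auto simp: edge_rel_def)
  then show ?thesis
    by (simp add: ind_connected_def)
qed

lemma simple_graph_edgeE:
  assumes "simple_graph V F" "e \<in> F"
  obtains u v where "e = {u, v}" "u \<noteq> v" "u \<in> V" "v \<in> V"
  using assms unfolding simple_graph_def by blast

lemma simple_graph_edgeD:
  "simple_graph V F \<Longrightarrow> {x, y} \<in> F \<Longrightarrow> x \<in> V \<and> y \<in> V"
  unfolding simple_graph_def by (metis doubleton_eq_iff)

lemma simple_graph_ind_connected_iff:
  assumes "simple_graph V F"
  shows "ind_connected F V \<longleftrightarrow> (\<forall>u\<in>V. \<forall>v\<in>V. (u, v) \<in> (edge_rel F)\<^sup>*)"
proof -
  have "{f \<in> F. f \<subseteq> V} = F"
    using assms by (auto simp: simple_graph_def)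
  then show ?thesis
    by (simp add: ind_connected_iff)
qed

lemma simple_graph_finite_edges: "simple_graph V F \<Longrightarrow> finite F"
proof -
  assume "simple_graph V F"
  then have "F \<subseteq> Pow V" "finite V"
    by (auto simp: simple_graph_def)
  then show "finite F"
    by (meson finite_Pow_iff finite_subset)
qed

lemma simple_graph_subset: "simple_graph V F \<Longrightarrow> G \<subseteq> F \<Longrightarrow> simple_graph V G"
  by (auto simp: simple_graph_def)

lemma simple_graph_restrict:
  assumes "simple_graph V F" "S \<subseteq> V"
  shows "simple_graph S {f \<in> F. f \<subseteq> S}"
  unfolding simple_graph_def
proof
  show "finite S"
    using assms finite_subset by (auto simp: simple_graph_def)
  show "\<forall>e\<in>{f \<in> F. f \<subseteq> S}. \<exists>u v. e = {u, v} \<and> u \<noteq> v \<and> u \<in> S \<and> v \<in> S"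
  proof
    fix e
    assume e: "e \<in> {f \<in> F. f \<subseteq> S}"
    then obtain u v where "e = {u, v}" "u \<noteq> v"
      using assms(1) by (auto elim: simple_graph_edgeE)
    then show "\<exists>u v. e = {u, v} \<and> u \<noteq> v \<and> u \<in> S \<and> v \<in> S"
      using e by blast
  qed
qed

lemma acyclic_edges_iff:
  "acyclic_edges F \<longleftrightarrow>
     (\<forall>u v. {u, v} \<in> F \<longrightarrow> u \<noteq> v \<longrightarrow> (u, v) \<notin> (edge_rel (F - {{u, v}}))\<^sup>*)"
  by (simp add: acyclic_edges_def edge_rel_def)

lemma acyclic_edges_subset: "acyclic_edges F \<Longrightarrow> G \<subseteq> F \<Longrightarrow> acyclic_edges G"
  unfolding acyclic_edges_iff by (meson Diff_mono edge_rel_rtrancl_mono order_refl subsetD)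

lemma card_le_card_edges_add_one_if_connected:
  assumes "finite F" "finite V" "r \<in> V" and reach: "\<forall>x\<in>V. (x, r) \<in> (edge_rel F)\<^sup>*"
  shows "card V \<le> card F + 1"
proof -
  let ?R = "edge_rel F"
  define d where "d x = (LEAST n. (x, r) \<in> ?R ^^ n)" for x
  have d: "(x, r) \<in> ?R ^^ d x" if "x \<in> V" for x
    unfolding d_def using reach that by (meson LeastI rtrancl_power)
  have descent: "\<exists>y. (x, y) \<in> ?R \<and> d y < d x" if x: "x \<in> V" "x \<noteq> r" for x
  proof -
    obtain k where k: "d x = Suc k"
      using d[OF x(1)] x(2) by (cases "d x") auto
    then obtain y where "(x, y) \<in> ?R" "(y, r) \<in> ?R ^^ k"
      using d[OF x(1)] by (metis relpow_Suc_D2)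
    moreover have "d y \<le> k"
      unfolding d_def using calculation(2) by (rule Least_le)
    ultimately show ?thesis
      using k by auto
  qed
  obtain nxt where nxt: "\<And>x. x \<in> V - {r} \<Longrightarrow> (x, nxt x) \<in> ?R \<and> d (nxt x) < d x"
    using descent by (metis Diff_iff singletonI)
  have "inj_on (\<lambda>x. {x, nxt x}) (V - {r})"
  proof (rule inj_onI)
    fix x y
    assume "x \<in> V - {r}" "y \<in> V - {r}" "{x, nxt x} = {y, nxt y}"
    then show "x = y"
      using nxt by (metis doubleton_eq_iff less_asym)
  qed
  moreover have "(\<lambda>x. {x, nxt x}) ` (V - {r}) \<subseteq> F"
    using nxt by auto
  ultimately have "card (V - {r}) \<le> card F"
    using assms(1) by (rule card_inj_on_le)
  then show ?thesis
    using assms(2,3) by simp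
qed

lemma card_edges_split:
  assumes G: "simple_graph V G" and closed: "\<And>a b. {a, b} \<in> G \<Longrightarrow> a \<in> S \<longleftrightarrow> b \<in> S"
  shows "card G = card {f \<in> G. f \<subseteq> S} + card {f \<in> G. f \<subseteq> V - S}"
proof -
  have "G = {f \<in> G. f \<subseteq> S} \<union> {f \<in> G. f \<subseteq> V - S}"
  proof (intro equalityI subsetI)
    fix f
    assume "f \<in> G"
    moreover obtain a b where "f = {a, b}" "a \<in> V" "b \<in> V"
      using G calculation by (auto elim: simple_graph_edgeE)
    ultimately show "f \<in> {f \<in> G. f \<subseteq> S} \<union> {f \<in> G. f \<subseteq> V - S}"
      using closed by auto
  qed auto
  moreover have "{f \<in> G. f \<subseteq> S} \<inter> {f \<in> G. f \<subseteq> V - S} = {}"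
  proof (rule equals0I)
    fix f
    assume "f \<in> {f \<in> G. f \<subseteq> S} \<inter> {f \<in> G. f \<subseteq> V - S}"
    then have "f \<in> G" "f = {}"
      by auto
    then show False
      using G by (auto elim: simple_graph_edgeE)
  qed
  moreover have "finite G"
    using G by (rule simple_graph_finite_edges)
  ultimately show ?thesis
    by (metis (no_types, lifting) card_Un_disjoint finite_Un)
qed

lemma card_edges_less_if_acyclic:
  assumes "simple_graph V F" "acyclic_edges F" "V \<noteq> {}"
  shows "card F < card V"
  using simple_graph_finite_edges[OF assms(1)] assms
proof (induction F arbitrary: V rule: finite_psubset_induct)
  case (psubset F)
  have finV: "finite V"
    using psubset.prems(1) by (simp add: simple_graph_def)
  show ?case
  proof (cases "F = {}")
    case True
    then show ?thesis
      using finV psubset.prems(3) by (simp add: card_gt_0_iff)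
  next
    case False
    then obtain e where "e \<in> F"
      by blast
    then obtain u v where "e = {u, v}" "u \<noteq> v" and V: "u \<in> V" "v \<in> V"
      by (rule simple_graph_edgeE[OF psubset.prems(1)])
    then have uv: "{u, v} \<in> F" "u \<noteq> v"
      using \<open>e \<in> F\<close> by auto
    define G where "G = F - {{u, v}}"
    have G: "G \<subset> F" "simple_graph V G"
      using uv(1) simple_graph_subset[OF psubset.prems(1)] by (auto simp: G_def)
    have IH: "card {f \<in> G. f \<subseteq> X} < card X" if "X \<subseteq> V" "X \<noteq> {}" for X
    proof (rule psubset.IH)
      show "{f \<in> G. f \<subseteq> X} \<subset> F"
        using G(1) by auto
      show "simple_graph X {f \<in> G. f \<subseteq> X}"
        using G(2) that(1) by (rule simple_graph_restrict)
      show "acyclic_edges {f \<in> G. f \<subseteq> X}"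
        using G(1) by (intro acyclic_edges_subset[OF psubset.prems(2)]) auto
    qed (rule that(2))
    \<comment> \<open>Deleting {u, v} separates the component S of u from v, and no edge of G crosses S.\<close>
    define S where "S = {x \<in> V. (u, x) \<in> (edge_rel G)\<^sup>*}"
    have "(u, v) \<notin> (edge_rel G)\<^sup>*"
      using psubset.prems(2) uv by (simp add: acyclic_edges_iff G_def)
    then have S: "S \<subseteq> V" "u \<in> S" "v \<in> V - S"
      using V by (auto simp: S_def)
    have "a \<in> S \<longleftrightarrow> b \<in> S" if "{a, b} \<in> G" for a b
    proof -
      have "(a, b) \<in> edge_rel G" "(b, a) \<in> edge_rel G"
        using that by (simp_all add: insert_commute)
      moreover have "a \<in> V" "b \<in> V"
        using simple_graph_edgeD[OF G(2) that] by simp_all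
      ultimately show ?thesis
        unfolding S_def using rtrancl_into_rtrancl[of u _ "edge_rel G"] by blast
    qed
    then have "card G = card {f \<in> G. f \<subseteq> S} + card {f \<in> G. f \<subseteq> V - S}"
      by (rule card_edges_split[OF G(2)])
    also have "\<dots> < card S + card (V - S) - 1"
      using IH[of S] IH[of "V - S"] S by fastforce
    also have "\<dots> = card V - 1"
      using S(1) finV by (metis card_Un_disjoint Diff_disjoint Un_Diff_cancel Un_absorb1
          finite_Diff finite_subset)
    finally show ?thesis
      using card_Suc_Diff1[OF psubset.hyps(1) uv(1)] by (simp add: G_def)
  qed
qed

lemma card_spanning_tree_edges:
  assumes "simple_graph V T" "acyclic_edges T" "V \<noteq> {}"
    and conn: "\<forall>x\<in>V. \<forall>y\<in>V. (x, y) \<in> (edge_rel T)\<^sup>*"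
  shows "card T + 1 = card V"
proof -
  obtain r where "r \<in> V"
    using assms(3) by blast
  then have "card V \<le> card T + 1"
    using assms(1) conn simple_graph_finite_edges
    by (intro card_le_card_edges_add_one_if_connected) (auto simp: simple_graph_def)
  moreover have "card T < card V"
    using assms(1-3) by (rule card_edges_less_if_acyclic)
  ultimately show ?thesis
    by linarith
qed

lemma acyclic_edges_if_connected_card_less:
  assumes F: "simple_graph V F" and conn: "\<forall>x\<in>V. \<forall>y\<in>V. (x, y) \<in> (edge_rel F)\<^sup>*"
    and card: "card F < card V"
  shows "acyclic_edges F"
proof (rule ccontr)
  assume "\<not> acyclic_edges F"
  then obtain u v where uv: "{u, v} \<in> F" "u \<noteq> v" "(u, v) \<in> (edge_rel (F - {{u, v}}))\<^sup>*"
    by (auto simp: acyclic_edges_iff)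
  define G where "G = F - {{u, v}}"
  have "(edge_rel F)\<^sup>* \<subseteq> (edge_rel G)\<^sup>*"
  proof (rule edge_rel_rtrancl_subset)
    fix x y
    assume "{x, y} \<in> F"
    then show "(x, y) \<in> (edge_rel G)\<^sup>*"
      using uv(3) edge_rel_rtrancl_sym[OF uv(3)]
      by (cases "{x, y} = {u, v}") (auto simp: G_def doubleton_eq_iff)
  qed
  moreover have "u \<in> V"
    using simple_graph_edgeD[OF F uv(1)] by simp
  ultimately have "card V \<le> card G + 1"
    using conn F simple_graph_finite_edges[OF F]
    by (intro card_le_card_edges_add_one_if_connected) (auto simp: simple_graph_def G_def)
  moreover have "card G + 1 = card F"
    using card_Suc_Diff1[OF simple_graph_finite_edges[OF F] uv(1)] by (simp add: G_def)
  ultimately show False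
    using card by linarith
qed

lemma edge_rel_rtrancl_exchange:
  assumes pq: "(p, q) \<in> (edge_rel F)\<^sup>*" and cut: "(p, q) \<notin> (edge_rel (F - {{c, d}}))\<^sup>*"
  shows "(edge_rel F)\<^sup>* \<subseteq> (edge_rel (insert {p, q} (F - {{c, d}})))\<^sup>*"
proof -
  define F' where "F' = insert {p, q} (F - {{c, d}})"
  have into_F': "(edge_rel (F - {{c, d}}))\<^sup>* \<subseteq> (edge_rel F')\<^sup>*"
    using edge_rel_rtrancl_mono[of "F - {{c, d}}" F'] by (auto simp: F'_def)
  have pq_F': "(p, q) \<in> (edge_rel F')\<^sup>*" "(q, p) \<in> (edge_rel F')\<^sup>*"
    by (auto simp: F'_def insert_commute)
  \<comment> \<open>Every walk from p to q in F uses {c, d}, so the new edge {p, q} reconnects c and d.\<close>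
  consider "(p, c) \<in> (edge_rel (F - {{c, d}}))\<^sup>*" "(d, q) \<in> (edge_rel (F - {{c, d}}))\<^sup>*"
    | "(p, d) \<in> (edge_rel (F - {{c, d}}))\<^sup>*" "(c, q) \<in> (edge_rel (F - {{c, d}}))\<^sup>*"
    using edge_rel_rtrancl_Diff_edge[OF pq, of c d] cut by blast
  then have cd: "(c, d) \<in> (edge_rel F')\<^sup>*"
  proof cases
    case 1
    then have "(p, c) \<in> (edge_rel F')\<^sup>*" "(d, q) \<in> (edge_rel F')\<^sup>*"
      using into_F' by blast+
    then show ?thesis
      using pq_F'(1) by (meson edge_rel_rtrancl_sym rtrancl_trans)
  next
    case 2
    then have "(c, q) \<in> (edge_rel F')\<^sup>*" "(p, d) \<in> (edge_rel F')\<^sup>*"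
      using into_F' by blast+
    then show ?thesis
      using pq_F'(2) by (meson rtrancl_trans)
  qed
  show ?thesis
    unfolding F'_def[symmetric]
  proof (rule edge_rel_rtrancl_subset)
    fix x y
    assume "{x, y} \<in> F"
    show "(x, y) \<in> (edge_rel F')\<^sup>*"
    proof (cases "{x, y} = {c, d}")
      case True
      then show ?thesis
        using cd edge_rel_rtrancl_sym[OF cd] by (auto simp: doubleton_eq_iff)
    next
      case False
      then have "(x, y) \<in> edge_rel F'"
        using \<open>{x, y} \<in> F\<close> by (simp add: F'_def)
      then show ?thesis
        by (rule r_into_rtrancl)
    qed
  qed
qed

lemma spanning_tree_exchange:
  assumes E: "simple_graph V E" and T: "spanning_tree V E T" and "f \<in> T" and pq: "{p, q} \<in> E"
    and cut: "(p, q) \<notin> (edge_rel (T - {f}))\<^sup>*"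
  shows "spanning_tree V E (insert {p, q} (T - {f}))"
proof -
  define T' where "T' = insert {p, q} (T - {f})"
  have T_graph: "simple_graph V T" and T'_graph: "simple_graph V T'"
    using T pq by (auto simp: spanning_tree_def T'_def intro: simple_graph_subset[OF E])
  have T_conn: "\<forall>x\<in>V. \<forall>y\<in>V. (x, y) \<in> (edge_rel T)\<^sup>*"
    using T by (simp add: spanning_tree_def simple_graph_ind_connected_iff[OF T_graph])
  obtain c d where f: "f = {c, d}"
    using \<open>f \<in> T\<close> by (rule simple_graph_edgeE[OF T_graph])
  have pqV: "p \<in> V" "q \<in> V"
    using simple_graph_edgeD[OF E pq] by simp_all
  then have "(edge_rel T)\<^sup>* \<subseteq> (edge_rel T')\<^sup>*"
    using T_conn cut unfolding T'_def f by (intro edge_rel_rtrancl_exchange) auto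
  then have T'_conn: "\<forall>x\<in>V. \<forall>y\<in>V. (x, y) \<in> (edge_rel T')\<^sup>*"
    using T_conn by blast
  have "{p, q} \<notin> T - {f}"
    using cut by auto
  then have "card T' = card T"
    using simple_graph_finite_edges[OF T_graph] card_Suc_Diff1[OF _ \<open>f \<in> T\<close>]
    by (simp add: T'_def)
  also have "\<dots> < card V"
    using T T_graph pqV by (intro card_edges_less_if_acyclic) (auto simp: spanning_tree_def)
  finally have "acyclic_edges T'"
    using T'_graph T'_conn by (intro acyclic_edges_if_connected_card_less)
  then show ?thesis
    using T pq T'_graph T'_conn
    by (auto simp: spanning_tree_def T'_def simple_graph_ind_connected_iff)
qed

lemma intra_doubleton [simp]: "intra grp {x, y} \<longleftrightarrow> grp x = grp y"
  by (auto simp: intra_def doubleton_eq_iff)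

text \<open>If every walk from a to b avoiding R used the edge {x, y}, then joining such a walk with
  the one avoiding {x, y} would connect x and y without that edge, a cycle in the forest F.\<close>
lemma acyclic_edges_rtrancl_Diff_insert:
  assumes "acyclic_edges F" "{x, y} \<in> F" "x \<noteq> y"
    and avoid_R: "(a, b) \<in> (edge_rel (F - R))\<^sup>*"
    and avoid_xy: "(a, b) \<in> (edge_rel (F - {{x, y}}))\<^sup>*"
  shows "(a, b) \<in> (edge_rel (F - insert {x, y} R))\<^sup>*"
proof -
  have eq: "F - insert {x, y} R = F - R - {{x, y}}"
    by auto
  have mono: "(edge_rel (F - R - {{x, y}}))\<^sup>* \<subseteq> (edge_rel (F - {{x, y}}))\<^sup>*"
    using edge_rel_rtrancl_mono[of "F - R - {{x, y}}" "F - {{x, y}}"] by auto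
  have not_xy: "(x, y) \<notin> (edge_rel (F - {{x, y}}))\<^sup>*"
    using assms(1-3) by (simp add: acyclic_edges_iff)
  have False if "(a, x) \<in> (edge_rel (F - {{x, y}}))\<^sup>*" "(b, y) \<in> (edge_rel (F - {{x, y}}))\<^sup>*"
    using that avoid_xy not_xy by (meson edge_rel_rtrancl_sym rtrancl_trans)
  moreover have False if "(a, y) \<in> (edge_rel (F - {{x, y}}))\<^sup>*" "(b, x) \<in> (edge_rel (F - {{x, y}}))\<^sup>*"
    using that avoid_xy not_xy by (meson edge_rel_rtrancl_sym rtrancl_trans)
  ultimately show ?thesis
    using edge_rel_rtrancl_Diff_edge[OF avoid_R, of x y] mono
    unfolding eq by (meson edge_rel_rtrancl_sym subsetD)
qed

lemma acyclic_edges_rtrancl_Diff: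
  assumes "simple_graph V F" "acyclic_edges F" "R \<subseteq> F"
    and "(a, b) \<in> (edge_rel F)\<^sup>*"
    and "\<forall>f\<in>R. (a, b) \<in> (edge_rel (F - {f}))\<^sup>*"
  shows "(a, b) \<in> (edge_rel (F - R))\<^sup>*"
proof -
  have "finite R"
    using assms(1,3) simple_graph_finite_edges finite_subset by blast
  then show ?thesis
    using assms(3,5)
  proof (induction R rule: finite_induct)
    case empty
    then show ?case
      using assms(4) by simp
  next
    case (insert f R)
    obtain x y where "f = {x, y}" "x \<noteq> y"
      using insert.prems(1) by (auto elim: simple_graph_edgeE[OF assms(1)])
    then show ?case
      using insert acyclic_edges_rtrancl_Diff_insert[OF assms(2)] by auto
  qed
qed

lemma intra_rtrancl_subgroup:
  assumes "simple_graph V F" "a \<in> V" "(a, b) \<in> (edge_rel {f \<in> F. intra grp f})\<^sup>*"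
  shows "(a, b) \<in> (edge_rel {f \<in> F. f \<subseteq> {v \<in> V. grp v = grp a}})\<^sup>*"
proof -
  have "(a, b) \<in> (edge_rel {f \<in> F. f \<subseteq> {v \<in> V. grp v = grp a}})\<^sup>* \<and> b \<in> V \<and> grp b = grp a"
    using assms(3)
  proof (induction rule: rtrancl_induct)
    case base
    then show ?case
      using assms(2) by simp
  next
    case (step y z)
    then have "{y, z} \<in> F" "grp z = grp a" "y \<in> V" "z \<in> V"
      using simple_graph_edgeD[OF assms(1)] by auto
    then show ?case
      using step.IH by (auto intro: rtrancl_into_rtrancl)
  qed
  then show ?thesis ..
qed

lemma min_spanning_tree_cut:
  fixes c :: "'a set \<Rightarrow> real"
  assumes E: "simple_graph V E" and T: "spanning_tree V E T"
    and T_min: "\<forall>T'. spanning_tree V E T' \<longrightarrow> (\<Sum>e\<in>T. c e) \<le> (\<Sum>e\<in>T'. c e)"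
    and "f \<in> T" "{p, q} \<in> E" and cut: "(p, q) \<notin> (edge_rel (T - {f}))\<^sup>*"
  shows "c f \<le> c {p, q}"
proof -
  have fin: "finite T"
    using T simple_graph_finite_edges[OF E] finite_subset by (auto simp: spanning_tree_def)
  have "{p, q} \<notin> T - {f}"
    using cut by auto
  then have "(\<Sum>e\<in>insert {p, q} (T - {f}). c e) = c {p, q} + (\<Sum>e\<in>T. c e) - c f"
    using fin \<open>f \<in> T\<close> by (simp add: sum_diff1)
  moreover have "(\<Sum>e\<in>T. c e) \<le> (\<Sum>e\<in>insert {p, q} (T - {f}). c e)"
    using T_min spanning_tree_exchange[OF E T assms(4,5) cut] by blast
  ultimately show ?thesis
    by linarith
qed

lemma min_spanning_tree_rtrancl_lighter:
  fixes c :: "'a set \<Rightarrow> real"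
  assumes E: "simple_graph V E" and T: "spanning_tree V E T"
    and T_min: "\<forall>T'. spanning_tree V E T' \<longrightarrow> (\<Sum>e\<in>T. c e) \<le> (\<Sum>e\<in>T'. c e)"
    and "f \<in> T" "L \<subseteq> E" and lighter: "\<forall>e\<in>L. c e < c f"
  shows "(edge_rel L)\<^sup>* \<subseteq> (edge_rel (T - {f}))\<^sup>*"
proof (rule edge_rel_rtrancl_subset)
  fix p q
  assume pq: "{p, q} \<in> L"
  show "(p, q) \<in> (edge_rel (T - {f}))\<^sup>*"
  proof (rule ccontr)
    assume "(p, q) \<notin> (edge_rel (T - {f}))\<^sup>*"
    then have "c f \<le> c {p, q}"
      using pq assms(4,5) by (intro min_spanning_tree_cut[OF E T T_min]) auto
    moreover have "c {p, q} < c f"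
      using lighter pq by blast
    ultimately show False
      by simp
  qed
qed

lemma min_spanning_tree_subgroup_connected:
  fixes c :: "'a set \<Rightarrow> real"
  assumes E: "simple_graph V E" and sub_conn: "ind_connected E {v \<in> V. grp v = m}"
    and sep: "\<forall>e\<in>E. \<forall>e'\<in>E. intra grp e \<longrightarrow> \<not> intra grp e' \<longrightarrow> c e < c e'"
    and T: "spanning_tree V E T"
    and T_min: "\<forall>T'. spanning_tree V E T' \<longrightarrow> (\<Sum>e\<in>T. c e) \<le> (\<Sum>e\<in>T'. c e)"
  shows "ind_connected T {v \<in> V. grp v = m}"
  unfolding ind_connected_iff
proof (intro ballI)
  let ?S = "{v \<in> V. grp v = m}"
  fix a b
  assume ab: "a \<in> ?S" "b \<in> ?S"
  have TE: "T \<subseteq> E" and T_graph: "simple_graph V T" and "acyclic_edges T"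
    using T simple_graph_subset[OF E] by (auto simp: spanning_tree_def)
  have "(a, b) \<in> (edge_rel {e \<in> E. e \<subseteq> ?S})\<^sup>*"
    using sub_conn ab by (simp add: ind_connected_iff)
  moreover have "(edge_rel {e \<in> E. e \<subseteq> ?S})\<^sup>* \<subseteq> (edge_rel (T - {f}))\<^sup>*"
    if "f \<in> T" "\<not> intra grp f" for f
  proof (rule min_spanning_tree_rtrancl_lighter[OF E T T_min \<open>f \<in> T\<close>])
    show "\<forall>e\<in>{e \<in> E. e \<subseteq> ?S}. c e < c f"
    proof
      fix e
      assume e: "e \<in> {e \<in> E. e \<subseteq> ?S}"
      then obtain u v where "e = {u, v}"
        by (auto elim: simple_graph_edgeE[OF E])
      with e have "intra grp e"
        by auto
      then show "c e < c f"
        using sep e that TE by blast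
    qed
  qed auto
  ultimately have "(a, b) \<in> (edge_rel (T - {f}))\<^sup>*" if "f \<in> T" "\<not> intra grp f" for f
    using that by blast
  moreover have "(a, b) \<in> (edge_rel T)\<^sup>*"
    using T ab by (simp add: spanning_tree_def simple_graph_ind_connected_iff[OF T_graph])
  ultimately have "(a, b) \<in> (edge_rel (T - {f \<in> T. \<not> intra grp f}))\<^sup>*"
    using T_graph \<open>acyclic_edges T\<close> by (intro acyclic_edges_rtrancl_Diff) auto
  moreover have "T - {f \<in> T. \<not> intra grp f} = {f \<in> T. intra grp f}"
    by auto
  ultimately have "(a, b) \<in> (edge_rel {f \<in> T. f \<subseteq> {v \<in> V. grp v = grp a}})\<^sup>*"
    using intra_rtrancl_subgroup[OF T_graph, of a b grp] ab by simp
  then show "(a, b) \<in> (edge_rel {f \<in> T. f \<subseteq> ?S})\<^sup>*"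
    using ab by simp
qed

lemma card_intra_edges:
  assumes T: "simple_graph V T" "acyclic_edges T"
    and sub_conn: "\<forall>m. ind_connected T {v \<in> V. grp v = m}"
  shows "card {f \<in> T. intra grp f} = (\<Sum>m\<in>grp ` V. card {v \<in> V. grp v = m} - 1)"
proof -
  define Tm where "Tm m = {f \<in> T. f \<subseteq> {v \<in> V. grp v = m}}" for m
  have intra_UN: "{f \<in> T. intra grp f} = (\<Union>m\<in>grp ` V. Tm m)"
  proof (intro equalityI subsetI)
    fix f
    assume "f \<in> {f \<in> T. intra grp f}"
    moreover obtain u v where "f = {u, v}" "u \<in> V" "v \<in> V"
      using calculation by (auto elim: simple_graph_edgeE[OF T(1)])
    ultimately show "f \<in> (\<Union>m\<in>grp ` V. Tm m)"
      by (auto simp: Tm_def)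
  next
    fix f
    assume "f \<in> (\<Union>m\<in>grp ` V. Tm m)"
    moreover obtain u v where "f = {u, v}"
      using calculation by (auto simp: Tm_def elim: simple_graph_edgeE[OF T(1)])
    ultimately show "f \<in> {f \<in> T. intra grp f}"
      by (auto simp: Tm_def)
  qed
  have disjoint: "Tm m \<inter> Tm m' = {}" if "m \<noteq> m'" for m m'
    using that T(1) by (fastforce simp: Tm_def elim: simple_graph_edgeE)
  have card_Tm: "card (Tm m) = card {v \<in> V. grp v = m} - 1" if "m \<in> grp ` V" for m
  proof -
    have "simple_graph {v \<in> V. grp v = m} (Tm m)"
      unfolding Tm_def using T(1) by (rule simple_graph_restrict) auto
    moreover have "acyclic_edges (Tm m)"
      using T(2) by (rule acyclic_edges_subset) (auto simp: Tm_def)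
    moreover have "ind_connected T {v \<in> V. grp v = m}"
      using sub_conn by blast
    then have "\<forall>x\<in>{v \<in> V. grp v = m}. \<forall>y\<in>{v \<in> V. grp v = m}. (x, y) \<in> (edge_rel (Tm m))\<^sup>*"
      by (simp only: ind_connected_iff Tm_def)
    ultimately have "card (Tm m) + 1 = card {v \<in> V. grp v = m}"
      using that by (intro card_spanning_tree_edges) auto
    then show ?thesis
      by linarith
  qed
  have "finite V" "finite T"
    using T(1) simple_graph_finite_edges by (auto simp: simple_graph_def)
  then have "card (\<Union>m\<in>grp ` V. Tm m) = (\<Sum>m\<in>grp ` V. card (Tm m))"
    using disjoint by (intro card_UN_disjoint) (auto simp: Tm_def)
  then show ?thesis
    using card_Tm by (simp add: intra_UN)
qed

lemma edge_rel_rtrancl_intra_inter: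
  assumes T: "simple_graph V T" "\<forall>m. ind_connected T {v \<in> V. grp v = m}"
    and T': "simple_graph V T'"
  shows "(edge_rel T')\<^sup>* \<subseteq> (edge_rel ({f \<in> T. intra grp f} \<union> {f \<in> T'. \<not> intra grp f}))\<^sup>*"
proof (rule edge_rel_rtrancl_subset)
  let ?F = "{f \<in> T. intra grp f} \<union> {f \<in> T'. \<not> intra grp f}"
  fix x y
  assume xy: "{x, y} \<in> T'"
  show "(x, y) \<in> (edge_rel ?F)\<^sup>*"
  proof (cases "grp x = grp y")
    case True
    let ?S = "{v \<in> V. grp v = grp x}"
    have "x \<in> ?S" "y \<in> ?S"
      using True simple_graph_edgeD[OF T' xy] by auto
    then have "(x, y) \<in> (edge_rel {f \<in> T. f \<subseteq> ?S})\<^sup>*"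
      using T(2) by (simp add: ind_connected_iff)
    moreover have "{f \<in> T. f \<subseteq> ?S} \<subseteq> ?F"
    proof
      fix f
      assume f: "f \<in> {f \<in> T. f \<subseteq> ?S}"
      then obtain u v where "f = {u, v}"
        by (auto elim: simple_graph_edgeE[OF T(1)])
      then show "f \<in> ?F"
        using f by auto
    qed
    ultimately show ?thesis
      by (rule edge_rel_rtrancl_mono[rotated])
  next
    case False
    then show ?thesis
      using xy by auto
  qed
qed

lemma spanning_tree_intra_inter:
  assumes E: "simple_graph V E"
    and T: "spanning_tree V E T" "\<forall>m. ind_connected T {v \<in> V. grp v = m}"
    and T': "spanning_tree V E T'" "\<forall>m. ind_connected T' {v \<in> V. grp v = m}"
  shows "spanning_tree V E ({f \<in> T. intra grp f} \<union> {f \<in> T'. \<not> intra grp f})"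
proof -
  define F where "F = {f \<in> T. intra grp f} \<union> {f \<in> T'. \<not> intra grp f}"
  have graphs: "simple_graph V T" "simple_graph V T'" "simple_graph V F"
    using T(1) T'(1) by (auto simp: spanning_tree_def F_def intro: simple_graph_subset[OF E])
  have F_conn: "\<forall>x\<in>V. \<forall>y\<in>V. (x, y) \<in> (edge_rel F)\<^sup>*"
    using T'(1) edge_rel_rtrancl_intra_inter[OF graphs(1) T(2) graphs(2)]
    by (auto simp: spanning_tree_def simple_graph_ind_connected_iff[OF graphs(2)] F_def)
  have fin: "finite T" "finite T'"
    using graphs simple_graph_finite_edges by auto
  have "acyclic_edges F"
  proof (cases "V = {}")
    case True
    then have "F = {}"
      using graphs(3) by (auto elim: simple_graph_edgeE)
    then show ?thesis
      by (simp add: acyclic_edges_def)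
  next
    case False
    have "card F = card {f \<in> T. intra grp f} + card {f \<in> T'. \<not> intra grp f}"
      unfolding F_def using fin by (intro card_Un_disjoint) auto
    also have "\<dots> = card {f \<in> T'. intra grp f} + card {f \<in> T'. \<not> intra grp f}"
      using T T' graphs by (simp add: card_intra_edges spanning_tree_def)
    also have "\<dots> = card ({f \<in> T'. intra grp f} \<union> {f \<in> T'. \<not> intra grp f})"
      using fin(2) by (intro card_Un_disjoint[symmetric]) auto
    also have "\<dots> = card T'"
      by (rule arg_cong[where f = card]) auto
    also have "\<dots> < card V"
      using T'(1) graphs(2) False
      by (intro card_edges_less_if_acyclic) (auto simp: spanning_tree_def)
    finally show ?thesis
      using graphs(3) F_conn by (intro acyclic_edges_if_connected_card_less)
  qed
  then show ?thesis
    using T(1) T'(1) graphs(3) F_conn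
    by (auto simp: spanning_tree_def simple_graph_ind_connected_iff F_def)
qed

lemma sum_wprime:
  assumes "finite X"
  shows "(\<Sum>e\<in>X. wprime grp \<beta> w e) =
    \<beta> * (\<Sum>e\<in>{f \<in> X. intra grp f}. - w e) + (\<Sum>e\<in>{f \<in> X. \<not> intra grp f}. - w e)"
  using assms by (simp add: wprime_def sum.If_cases sum_distrib_left Int_def conj_commute)

lemma sum_intra_inter:
  assumes "finite X"
  shows "(\<Sum>e\<in>X. g e) = (\<Sum>e\<in>{f \<in> X. intra grp f}. g e) + (\<Sum>e\<in>{f \<in> X. \<not> intra grp f}. g e)"
  using assms sum.If_cases[of X "intra grp" g g] by (simp add: Int_def conj_commute)

lemma min_spanning_tree_least_violated:
  assumes E: "simple_graph V E" and "\<beta> > 0"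
    and Tb: "spanning_tree V E Tb" "\<forall>m. ind_connected Tb {v \<in> V. grp v = m}"
    and Tb_min: "\<forall>T'. spanning_tree V E T' \<longrightarrow>
                   (\<Sum>e\<in>Tb. wprime grp \<beta> w e) \<le> (\<Sum>e\<in>T'. wprime grp \<beta> w e)"
    and T: "spanning_tree V E T" "\<forall>m. ind_connected T {v \<in> V. grp v = m}"
  shows "(\<Sum>e\<in>Tb. - w e) \<le> (\<Sum>e\<in>T. - w e)"
proof -
  define A where "A X = (\<Sum>e\<in>{f \<in> X. intra grp f}. - w e)" for X
  define B where "B X = (\<Sum>e\<in>{f \<in> X. \<not> intra grp f}. - w e)" for X
  have fin: "finite X" if "spanning_tree V E X" for X
    using that simple_graph_finite_edges[OF E] finite_subset by (auto simp: spanning_tree_def)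
  have weight: "(\<Sum>e\<in>X. wprime grp \<beta> w e) = \<beta> * A X + B X" if "spanning_tree V E X" for X
    unfolding A_def B_def using fin[OF that] by (rule sum_wprime)
  define T1 where "T1 = {f \<in> T. intra grp f} \<union> {f \<in> Tb. \<not> intra grp f}"
  define T2 where "T2 = {f \<in> Tb. intra grp f} \<union> {f \<in> T. \<not> intra grp f}"
  have "{f \<in> T1. intra grp f} = {f \<in> T. intra grp f}"
    "{f \<in> T1. \<not> intra grp f} = {f \<in> Tb. \<not> intra grp f}"
    by (auto simp: T1_def)
  then have T1: "spanning_tree V E T1" "A T1 = A T" "B T1 = B Tb"
    using spanning_tree_intra_inter[OF E T Tb] by (simp_all add: T1_def A_def B_def)
  have "{f \<in> T2. intra grp f} = {f \<in> Tb. intra grp f}"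
    "{f \<in> T2. \<not> intra grp f} = {f \<in> T. \<not> intra grp f}"
    by (auto simp: T2_def)
  then have T2: "spanning_tree V E T2" "A T2 = A Tb" "B T2 = B T"
    using spanning_tree_intra_inter[OF E Tb T] by (simp_all add: T2_def A_def B_def)
  have "\<beta> * A Tb + B Tb \<le> \<beta> * A T + B Tb"
    using Tb_min T1 weight[OF Tb(1)] weight[OF T1(1)] by metis
  then have "A Tb \<le> A T"
    using \<open>\<beta> > 0\<close> by simp
  moreover have "\<beta> * A Tb + B Tb \<le> \<beta> * A Tb + B T"
    using Tb_min T2 weight[OF Tb(1)] weight[OF T2(1)] by metis
  ultimately show ?thesis
    using sum_intra_inter[OF fin[OF Tb(1)], of "\<lambda>e. - w e" grp]
      sum_intra_inter[OF fin[OF T(1)], of "\<lambda>e. - w e" grp]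
    by (simp add: A_def B_def)
qed

theorem theorem5:
  fixes V :: "'a set" and E :: "'a set set" and grp :: "'a \<Rightarrow> 'b"
    and w :: "'a set \<Rightarrow> real" and \<beta> :: real and Tb :: "'a set set"
  assumes graph: "simple_graph V E"
    and conn: "ind_connected E V"
    and sub_conn: "\<forall>m. ind_connected E {v \<in> V. grp v = m}"
    and beta: "\<beta> > 1"
    and sep: "\<forall>e\<in>E. \<forall>e'\<in>E. intra grp e \<longrightarrow> \<not> intra grp e' \<longrightarrow>
                wprime grp \<beta> w e < wprime grp \<beta> w e'"
    and Tb_tree: "spanning_tree V E Tb"
    and Tb_min: "\<forall>T. spanning_tree V E T \<longrightarrow>
                   (\<Sum>e\<in>Tb. wprime grp \<beta> w e) \<le> (\<Sum>e\<in>T. wprime grp \<beta> w e)"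
  shows "(ind_connected Tb V \<and> (\<forall>m. ind_connected Tb {v \<in> V. grp v = m}))
       \<and> (\<forall>T. spanning_tree V E T \<and> (\<forall>m. ind_connected T {v \<in> V. grp v = m}) \<longrightarrow>
              (\<Sum>e\<in>Tb. - w e) \<le> (\<Sum>e\<in>T. - w e))"
proof -
  have Tb_sub_conn: "\<forall>m. ind_connected Tb {v \<in> V. grp v = m}"
    using min_spanning_tree_subgroup_connected[OF graph _ sep Tb_tree Tb_min] sub_conn by blast
  moreover have "ind_connected Tb V"
    using Tb_tree by (simp add: spanning_tree_def)
  moreover have "(\<Sum>e\<in>Tb. - w e) \<le> (\<Sum>e\<in>T. - w e)"
    if "spanning_tree V E T" "\<forall>m. ind_connected T {v \<in> V. grp v = m}" for T
    using min_spanning_tree_least_violated[OF graph _ Tb_tree Tb_sub_conn Tb_min that] beta by simp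
  ultimately show ?thesis
    by blast
qed

end
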